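(* For a complex number $p$, $\deg(p)=1$ if and only if $p$ is a nonzero algebraic number. In particular every algebraic number is a period, and every period of degree $\le 1$ is algebraic.
   Context: Let $\overline{\mathbb{Q}}$ denote the field of algebraic numbers. For $n\ge 1$, an admissible domain in $\mathbb{R}^n$ is a subset of $\mathbb{R}^n$ which is a finite union of sets of the form $\{x\in\mathbb{R}^n : P_1(x)\,\square_1\, 0,\dots,P_r(x)\,\square_r\, 0\}$, where each $P_i$ is a polynomial with real algebraic coefficients and each $\square_i\in\{\ge,>\}$, and which has finite Lebesgue measure $\mathrm{vol}_n$. A real number $p$ is a real period if $p=\mathrm{vol}_n(\Sigma_1)-\mathrm{vol}_n(\Sigma_2)$ for some $n\ge1$ and admissible domains $\Sigma_1,\Sigma_2\subseteq\mathbb{R}^n$; a complex number is a period if its real and imaginary parts are real periods. The degree is defined as follows: $\deg(0)=0$; for a nonzero real period $p$, $\deg(p)$ is the least $n\ge 1$ such that $p=\mathrm{vol}_n(\Sigma_1)-\mathrm{vol}_n(\Sigma_2)$ with $\Sigma_1,\Sigma_2$ admissible domains in $\mathbb{R}^n$; for a complex period $p=a+ib$ ($a,b$ real), $\deg(p)=\max(\deg(a),\deg(b))$; for a complex number that is not a period, $\deg(p)=\infty$, with $\infty$ larger than every integer. *)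

theory Defs
  imports "HOL-Analysis.Analysis" "HOL-Computational_Algebra.Polynomial" "HOL-Library.Extended_Nat"
begin

text \<open>Points of R^n are modelled as functions nat => real in PiE {..<n} UNIV
  (coordinates 0..n-1, undefined elsewhere); Lebesgue measure on R^n is the
  n-fold product of lborel.\<close>

definition Rn :: "nat \<Rightarrow> (nat \<Rightarrow> real) set" where
  "Rn n = PiE {..<n} (\<lambda>_. UNIV)"

definition vol :: "nat \<Rightarrow> (nat \<Rightarrow> real) set \<Rightarrow> real" where
  "vol n S = measure (PiM {..<n} (\<lambda>_. lborel)) S"

inductive alg_poly :: "nat \<Rightarrow> ((nat \<Rightarrow> real) \<Rightarrow> real) \<Rightarrow> bool" for n where
  const: "algebraic c \<Longrightarrow> alg_poly n (\<lambda>x. c)"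
| var: "i < n \<Longrightarrow> alg_poly n (\<lambda>x. x i)"
| add: "alg_poly n P \<Longrightarrow> alg_poly n Q \<Longrightarrow> alg_poly n (\<lambda>x. P x + Q x)"
| mult: "alg_poly n P \<Longrightarrow> alg_poly n Q \<Longrightarrow> alg_poly n (\<lambda>x. P x * Q x)"

definition basic_set :: "nat \<Rightarrow> (((nat \<Rightarrow> real) \<Rightarrow> real) \<times> bool) list \<Rightarrow> (nat \<Rightarrow> real) set" where
  "basic_set n cs = {x \<in> Rn n. \<forall>(P, strict) \<in> set cs. (if strict then P x > 0 else P x \<ge> 0)}"

definition admissible :: "nat \<Rightarrow> (nat \<Rightarrow> real) set \<Rightarrow> bool" where
  "admissible n S \<longleftrightarrow>
     (\<exists>F. finite F \<and> S = \<Union>(basic_set n ` F) \<and>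
          (\<forall>cs\<in>F. \<forall>(P, _) \<in> set cs. alg_poly n P)) \<and>
     emeasure (PiM {..<n} (\<lambda>_. lborel)) S < \<infinity>"

definition real_period_dims :: "real \<Rightarrow> nat set" where
  "real_period_dims p = {n. n \<ge> 1 \<and> (\<exists>S1 S2. admissible n S1 \<and> admissible n S2 \<and>
       p = vol n S1 - vol n S2)}"

definition real_period :: "real \<Rightarrow> bool" where
  "real_period p \<longleftrightarrow> real_period_dims p \<noteq> {}"

definition period :: "complex \<Rightarrow> bool" where
  "period z \<longleftrightarrow> real_period (Re z) \<and> real_period (Im z)"

definition real_deg :: "real \<Rightarrow> enat" where
  "real_deg p = (if p = 0 then 0
                 else if real_period p then enat (LEAST n. n \<in> real_period_dims p)
                 else \<infinity>)"

definition deg :: "complex \<Rightarrow> enat" where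
  "deg z = (if period z then max (real_deg (Re z)) (real_deg (Im z)) else \<infinity>)"

end

theory Submission
  imports Defs
begin

(*
  Algebraic numbers are periods of degree at most 1: a real algebraic number c >= 0 is the
  length of the admissible interval [0, c] in R^1, and a = max a 0 - max (-a) 0.

  Conversely, a one-dimensional admissible set is a finite Boolean combination of sign
  conditions of univariate polynomials with algebraic coefficients.  Its membership can only
  change at the finitely many (algebraic) roots of these polynomials, so if its measure is
  finite it is, up to a null set, a finite union of intervals with algebraic endpoints, and
  its length is algebraic.

  The library does not provide closure of the algebraic numbers under addition and
  multiplication, so the file first proves it: an element y is algebraic if multiplication
  by y preserves a finite-dimensional Q-subspace containing 1, and such subspaces can be
  enlarged to accommodate a root of any polynomial whose coefficients already act on them.
*)

definition qscale :: "rat \<Rightarrow> 'a::field_char_0 \<Rightarrow> 'a" where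
  "qscale r x = of_rat r * x"

global_interpretation Q: vector_space "qscale :: rat \<Rightarrow> 'a::field_char_0 \<Rightarrow> 'a"
  by unfold_locales (auto simp: qscale_def algebra_simps of_rat_add of_rat_mult)

lemma Q_module_hom_mult: "module_hom qscale qscale (\<lambda>v::'a::field_char_0. c * v)"
  by unfold_locales (auto simp: qscale_def algebra_simps)

lemma mult_span_subset:
  fixes c :: "'a::field_char_0"
  assumes "\<forall>t\<in>T. c * t \<in> Q.span U" and "v \<in> Q.span T"
  shows "c * v \<in> Q.span U"
proof -
  have "Q.subspace ((\<lambda>v. c * v) -` Q.span U)"
    by (rule module_hom.subspace_vimage[OF Q_module_hom_mult]) simp
  thus ?thesis using Q.span_minimal[of T] assms by blast
qed

definition multipliers :: "'a::field_char_0 set \<Rightarrow> 'a set" where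
  "multipliers T = {s. \<forall>t\<in>T. s * t \<in> Q.span T}"

lemma multipliers_span: "s \<in> multipliers T \<Longrightarrow> v \<in> Q.span T \<Longrightarrow> s * v \<in> Q.span T"
  unfolding multipliers_def by (rule mult_span_subset) auto

lemma multipliers_Rats: "x \<in> \<rat> \<Longrightarrow> x \<in> multipliers T"
  by (auto elim!: Rats_cases simp: multipliers_def) (metis Q.span_base Q.span_scale qscale_def)

lemma multipliers_add: "a \<in> multipliers T \<Longrightarrow> b \<in> multipliers T \<Longrightarrow> a + b \<in> multipliers T"
  by (auto simp: multipliers_def distrib_right intro: Q.span_add)

lemma multipliers_mult: "a \<in> multipliers T \<Longrightarrow> b \<in> multipliers T \<Longrightarrow> a * b \<in> multipliers T"
  by (auto simp: multipliers_def mult.assoc intro: multipliers_span)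

lemma algebraic_if_rational_relation:
  fixes y :: "'a::field_char_0"
  assumes K: "finite K" and rel: "(\<Sum>k\<in>K. of_rat (u k) * y ^ k) = 0"
    and nontriv: "k0 \<in> K" "u k0 \<noteq> 0"
  shows "algebraic y"
proof -
  define p :: "'a poly" where "p = (\<Sum>k\<in>K. monom (of_rat (u k)) k)"
  have coeff_p: "coeff p i = (if i \<in> K then of_rat (u i) else 0)" for i
    unfolding p_def coeff_sum using K by (auto simp: coeff_monom)
  show ?thesis
  proof (rule algebraicI')
    show "coeff p i \<in> \<rat>" for i by (simp add: coeff_p)
    show "p \<noteq> 0" using nontriv coeff_p[of k0] by auto
    show "poly p y = 0" using rel by (simp add: p_def poly_sum poly_monom)
  qed
qed

(* If all powers of y lie in a finite-dimensional Q-space, then card T + 1 of them are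
   linearly dependent, so y is algebraic. *)
lemma algebraic_if_powers_in_span:
  fixes y :: "'a::field_char_0"
  assumes T: "finite T" and powers: "\<And>k. y ^ k \<in> Q.span T"
  shows "algebraic y"
proof (cases "inj_on (\<lambda>k. y ^ k) {..card T}")
  case False
  then obtain i j where "i \<noteq> j" "y ^ i = y ^ j" unfolding inj_on_def by blast
  thus ?thesis
    by (intro algebraic_if_rational_relation[of "{i, j}" "\<lambda>k. if k = i then 1 else -1" y i]) auto
next
  case inj: True
  define S where "S = (\<lambda>k. y ^ k) ` {..card T}"
  have "card S = Suc (card T)" using inj by (simp add: S_def card_image)
  moreover have "S \<subseteq> Q.span T" using powers by (auto simp: S_def)
  ultimately have "Q.dependent S" using Q.independent_span_bound[OF T, of S] by auto
  then obtain t u where t: "finite t" "t \<subseteq> S" and rel: "(\<Sum>v\<in>t. of_rat (u v) * v) = 0"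
    and nontriv: "\<exists>v\<in>t. u v \<noteq> 0"
    unfolding Q.dependent_explicit qscale_def by blast
  define K where "K = {k \<in> {..card T}. y ^ k \<in> t}"
  have t_eq: "t = (\<lambda>k. y ^ k) ` K" using t(2) by (auto simp: K_def S_def)
  have "inj_on (\<lambda>k. y ^ k) K" using inj by (rule inj_on_subset) (auto simp: K_def)
  hence "(\<Sum>k\<in>K. of_rat (u (y ^ k)) * y ^ k) = 0" using rel by (simp add: t_eq sum.reindex)
  moreover obtain k0 where "k0 \<in> K" "u (y ^ k0) \<noteq> 0" using nontriv t_eq by auto
  ultimately show ?thesis by (intro algebraic_if_rational_relation[of K]) (auto simp: K_def)
qed

lemma multipliers_algebraic:
  assumes "finite T" "1 \<in> Q.span T" "y \<in> multipliers T"
  shows "algebraic y"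
proof (rule algebraic_if_powers_in_span[OF assms(1)])
  show "y ^ k \<in> Q.span T" for k
    by (induction k) (auto simp: assms(2) multipliers_span[OF assms(3)])
qed

(* Adjoining y with y^d = sum u_i y^i (u_i multipliers of T): the products t * y^k with
   t in T and k < d generate a space on which y and all old multipliers act. *)
lemma multipliers_adjoin:
  fixes y :: "'a::field_char_0"
  assumes T: "finite T" "1 \<in> Q.span T" and d: "d > 0"
    and eq: "y ^ d = (\<Sum>i<d. u i * y ^ i)" and u: "\<And>i. i < d \<Longrightarrow> u i \<in> multipliers T"
  shows "\<exists>T'. finite T' \<and> 1 \<in> Q.span T' \<and> multipliers T \<subseteq> multipliers T' \<and> y \<in> multipliers T'"
proof -
  define T' where "T' = (\<lambda>(t, k). t * y ^ k) ` (T \<times> {..<d})"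
  have in_T': "t * y ^ k \<in> T'" if "t \<in> T" "k < d" for t k
    using that unfolding T'_def by force
  have "T \<subseteq> T'" using in_T'[of _ 0] d by auto
  have shift: "y ^ k * v \<in> Q.span T'" if "v \<in> Q.span T" "k < d" for v k
    by (rule mult_span_subset[OF _ that(1)]) (use in_T' that(2) in \<open>auto simp: mult.commute intro: Q.span_base\<close>)
  have "finite T'" using T by (simp add: T'_def)
  moreover have "1 \<in> Q.span T'" using T(2) Q.span_mono[OF \<open>T \<subseteq> T'\<close>] by auto
  moreover have "multipliers T \<subseteq> multipliers T'"
  proof
    fix s assume s: "s \<in> multipliers T"
    { fix t k assume tk: "t \<in> T" "k < d"
      hence "s * t \<in> Q.span T" using s by (auto simp: multipliers_def)
      from shift[OF this tk(2)] have "s * (t * y ^ k) \<in> Q.span T'" by (simp add: algebra_simps) }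
    thus "s \<in> multipliers T'" by (auto simp: multipliers_def T'_def)
  qed
  moreover have "y * (t * y ^ k) \<in> Q.span T'" if tk: "t \<in> T" "k < d" for t k
  proof (cases "Suc k < d")
    case True
    thus ?thesis using in_T'[OF tk(1) True] by (simp add: Q.span_base algebra_simps)
  next
    case False
    hence "Suc k = d" using tk(2) by simp
    hence "y * (t * y ^ k) = t * y ^ d" by (auto simp: algebra_simps)
    also have "\<dots> = (\<Sum>i<d. y ^ i * (u i * t))" by (simp add: eq sum_distrib_left algebra_simps)
    also have "\<dots> \<in> Q.span T'"
      using u tk(1) by (intro Q.span_sum shift) (auto simp: multipliers_def)
    finally show ?thesis .
  qed
  hence "y \<in> multipliers T'" by (auto simp: multipliers_def T'_def)
  ultimately show ?thesis by blast
qed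


(* The same for a root of any nonzero polynomial whose coefficients and inverse leading
   coefficient are multipliers: divide by the leading coefficient. *)
lemma multipliers_adjoin_root:
  fixes y :: "'a::field_char_0"
  assumes T: "finite T" "1 \<in> Q.span T" and q: "q \<noteq> 0" "poly q y = 0"
    and coeffs: "\<And>i. coeff q i \<in> multipliers T"
    and lead: "inverse (lead_coeff q) \<in> multipliers T"
  shows "\<exists>T'. finite T' \<and> 1 \<in> Q.span T' \<and> multipliers T \<subseteq> multipliers T' \<and> y \<in> multipliers T'"
proof -
  define c where "c = inverse (lead_coeff q)"
  define d where "d = degree q"
  have "d > 0"
  proof (rule ccontr)
    assume "\<not> d > 0"
    hence "degree q = 0" by (simp add: d_def)
    then obtain a where "q = [:a:]" by (rule degree_eq_zeroE)
    with q show False by simp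
  qed
  have split: "(\<Sum>i<d. coeff q i * y ^ i) + lead_coeff q * y ^ d = 0"
    using q(2) by (simp add: poly_altdef d_def lessThan_Suc_atMost[symmetric])
  have "y ^ d = c * (lead_coeff q * y ^ d)" using q(1) by (simp add: c_def)
  also have "\<dots> = c * - (\<Sum>i<d. coeff q i * y ^ i)"
    using split by (metis add.commute eq_neg_iff_add_eq_0)
  also have "\<dots> = (\<Sum>i<d. - (c * coeff q i) * y ^ i)"
    by (simp add: sum_distrib_left mult.assoc flip: sum_negf)
  finally have "y ^ d = (\<Sum>i<d. - (c * coeff q i) * y ^ i)" .
  moreover have "- (c * coeff q i) \<in> multipliers T" for i
    using multipliers_mult[OF multipliers_Rats[of "-1"] multipliers_mult[OF lead coeffs]]
    by (simp add: c_def)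
  ultimately show ?thesis by (rule multipliers_adjoin[OF T \<open>d > 0\<close>])
qed

lemma multipliers_exist:
  fixes X :: "'a::field_char_0 set"
  assumes "finite X" "\<forall>x\<in>X. algebraic x"
  shows "\<exists>T. finite T \<and> 1 \<in> Q.span T \<and> X \<subseteq> multipliers T"
  using assms
proof (induction X rule: finite_induct)
  case empty
  show ?case by (rule exI[of _ "{1}"]) (auto intro: Q.span_base)
next
  case (insert a X)
  then obtain T where T: "finite T" "1 \<in> Q.span T" "X \<subseteq> multipliers T" by auto
  obtain q where q: "\<And>i. coeff q i \<in> \<rat>" "q \<noteq> 0" "poly q a = 0"
    using insert.prems unfolding algebraic_altdef by auto
  have "inverse (lead_coeff q) \<in> \<rat>" using q(1) by simp
  then obtain T' where "finite T'" "1 \<in> Q.span T'" "multipliers T \<subseteq> multipliers T'" "a \<in> multipliers T'"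
    using multipliers_adjoin_root[OF T(1,2) q(2,3) multipliers_Rats[OF q(1)] multipliers_Rats] by blast
  thus ?case using T(3) by blast
qed

lemma algebraic_add: "algebraic a \<Longrightarrow> algebraic b \<Longrightarrow> algebraic (a + b)"
  using multipliers_exist[of "{a, b}"] by (auto intro: multipliers_algebraic multipliers_add)

lemma algebraic_mult: "algebraic a \<Longrightarrow> algebraic b \<Longrightarrow> algebraic (a * b)"
  using multipliers_exist[of "{a, b}"] by (auto intro: multipliers_algebraic multipliers_mult)

lemma algebraic_diff: "algebraic a \<Longrightarrow> algebraic b \<Longrightarrow> algebraic (a - b)"
  using algebraic_add[of a "- b"] by auto

lemma algebraic_sum: "(\<And>i. i \<in> I \<Longrightarrow> algebraic (f i)) \<Longrightarrow> algebraic (sum f I)"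
  by (induction I rule: infinite_finite_induct) (auto intro: algebraic_add)

lemma algebraic_poly_root:
  fixes q :: "'a::field_char_0 poly"
  assumes q: "q \<noteq> 0" "poly q x = 0" and coeffs: "\<And>i. algebraic (coeff q i)"
  shows "algebraic x"
proof -
  define X where "X = insert (inverse (lead_coeff q)) (coeff q ` {..degree q})"
  obtain T where T: "finite T" "1 \<in> Q.span T" "X \<subseteq> multipliers T"
    using multipliers_exist[of X] coeffs by (auto simp: X_def)
  have "coeff q i \<in> multipliers T" for i
    using T(3) by (cases "i \<le> degree q") (auto simp: X_def coeff_eq_0 multipliers_Rats)
  moreover have "inverse (lead_coeff q) \<in> multipliers T" using T(3) by (auto simp: X_def)
  ultimately show ?thesis
    using multipliers_adjoin_root[OF T(1,2) q] multipliers_algebraic by blast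
qed

lemma algebraic_complex_iff: "algebraic (z::complex) \<longleftrightarrow> algebraic (Re z) \<and> algebraic (Im z)"
proof
  assume z: "algebraic z"
  have "complex_of_real (Re z) = (z + cnj z) * inverse 2"
    by (simp add: complex_add_cnj)
  moreover have "algebraic ((z + cnj z) * inverse 2)"
    using z by (intro algebraic_mult algebraic_add algebraic_inverse) auto
  moreover have "complex_of_real (Im z) = (z - cnj z) * inverse (2 * \<i>)"
    by (simp add: complex_diff_cnj field_simps)
  moreover have "algebraic ((z - cnj z) * inverse (2 * \<i>))"
    using z by (intro algebraic_mult algebraic_diff algebraic_inverse) auto
  ultimately show "algebraic (Re z) \<and> algebraic (Im z)"
    by (metis algebraic_of_real_iff)
next
  assume "algebraic (Re z) \<and> algebraic (Im z)"
  hence "algebraic (complex_of_real (Re z) + \<i> * complex_of_real (Im z))"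
    by (intro algebraic_add algebraic_mult) auto
  thus "algebraic z" by (simp add: complex_eq[symmetric])
qed

definition piecewise_const :: "real set \<Rightarrow> real set \<Rightarrow> bool" where
  "piecewise_const Z A \<longleftrightarrow> (\<forall>x y. closed_segment x y \<inter> Z = {} \<longrightarrow> (x \<in> A \<longleftrightarrow> y \<in> A))"

lemma piecewise_const_mono: "piecewise_const Z A \<Longrightarrow> Z \<subseteq> Z' \<Longrightarrow> piecewise_const Z' A"
  unfolding piecewise_const_def by blast

lemma piecewise_const_Union_Inter:
  assumes "\<And>i. i \<in> I \<Longrightarrow> piecewise_const Z (A i)"
  shows "piecewise_const Z (\<Union>i\<in>I. A i)" "piecewise_const Z (\<Inter>i\<in>I. A i)"
  using assms unfolding piecewise_const_def by blast+

lemma piecewise_const_on_convex: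
  assumes pc: "piecewise_const Z A" and I: "convex I" "I \<inter> Z = {}"
  shows "A \<inter> I = {} \<or> I \<subseteq> A"
  using assms unfolding piecewise_const_def convex_contains_segment by blast

lemma poly_no_root_same_sign:
  fixes q :: "real poly"
  assumes no_root: "\<forall>z\<in>closed_segment x y. poly q z \<noteq> 0"
  shows "0 < poly q x \<longleftrightarrow> 0 < poly q y"
proof -
  have ordered: "0 < poly q a \<longleftrightarrow> 0 < poly q b"
    if ab: "a < b" and no_root_ab: "\<forall>z\<in>{a..b}. poly q z \<noteq> 0" for a b
  proof (rule ccontr)
    assume "\<not> (0 < poly q a \<longleftrightarrow> 0 < poly q b)"
    moreover have "poly q a \<noteq> 0" "poly q b \<noteq> 0" using ab no_root_ab by auto
    ultimately have "(poly q a < 0 \<and> 0 < poly q b) \<or> (0 < poly q a \<and> poly q b < 0)" by linarith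
    then obtain z where "a < z" "z < b" "poly q z = 0"
      using poly_IVT_pos[OF ab] poly_IVT_neg[OF ab] by blast
    thus False using no_root_ab by auto
  qed
  show ?thesis
  proof (cases x y rule: linorder_cases)
    case less
    thus ?thesis using ordered[of x y] no_root by (simp add: closed_segment_eq_real_ivl)
  next
    case greater
    thus ?thesis using ordered[of y x] no_root by (simp add: closed_segment_eq_real_ivl)
  qed simp
qed

lemma poly_sign_sets_piecewise_const:
  fixes q :: "real poly"
  assumes coeffs: "\<And>i. algebraic (coeff q i)"
  obtains Z where "finite Z" "\<forall>z\<in>Z. algebraic z"
    "piecewise_const Z {t. 0 < poly q t}" "piecewise_const Z {t. 0 \<le> poly q t}"
proof (cases "q = 0")
  case True
  thus ?thesis by (intro that[of "{}"]) (auto simp: piecewise_const_def)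
next
  case False
  let ?Z = "{t. poly q t = 0}"
  have same: "(0 < poly q x \<longleftrightarrow> 0 < poly q y) \<and> (0 \<le> poly q x \<longleftrightarrow> 0 \<le> poly q y)"
    if "closed_segment x y \<inter> ?Z = {}" for x y
  proof -
    have "\<forall>z\<in>closed_segment x y. poly q z \<noteq> 0" using that by blast
    moreover from this have "poly q x \<noteq> 0" "poly q y \<noteq> 0" by auto
    ultimately show ?thesis using poly_no_root_same_sign[of x y q] by linarith
  qed
  show ?thesis
  proof (rule that)
    show "finite ?Z" using False by (rule poly_roots_finite)
    show "\<forall>z\<in>?Z. algebraic z" using False coeffs by (auto intro: algebraic_poly_root)
    show "piecewise_const ?Z {t. 0 < poly q t}" "piecewise_const ?Z {t. 0 \<le> poly q t}"
      using same by (auto simp: piecewise_const_def)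
  qed
qed

lemma lborel_measure_gap:
  fixes A :: "real set"
  assumes ab: "a \<le> b" and gap: "A \<inter> {a<..<b} = {} \<or> {a<..<b} \<subseteq> A"
  shows "A \<inter> {a..b} \<in> sets lborel \<and> measure lborel (A \<inter> {a..b}) \<in> {0, b - a}"
proof -
  have ends: "A \<inter> {a, b} \<in> null_sets lborel" by (rule finite_imp_null_set_lborel) simp
  show ?thesis
    using gap
  proof
    assume "A \<inter> {a<..<b} = {}"
    hence "A \<inter> {a..b} = A \<inter> {a, b}" using ab by auto
    thus ?thesis using ends by (auto simp: measure_def)
  next
    assume "{a<..<b} \<subseteq> A"
    hence eq: "A \<inter> {a..b} = {a<..<b} \<union> A \<inter> {a, b}" using ab by auto
    have "measure lborel (A \<inter> {a..b}) = b - a"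
      unfolding eq using measure_Un_null_set[OF _ ends, of "{a<..<b}"] ab by simp
    thus ?thesis using ends null_setsD2 by (auto simp: eq)
  qed
qed

lemma lborel_measure_split:
  fixes A :: "real set"
  assumes z: "a \<le> z" "z \<le> b" and meas: "A \<inter> {a..z} \<in> sets lborel" "A \<inter> {z..b} \<in> sets lborel"
  shows "A \<inter> {a..b} \<in> sets lborel \<and>
    measure lborel (A \<inter> {a..b}) = measure lborel (A \<inter> {a..z}) + measure lborel (A \<inter> {z..b})"
proof -
  have eq: "A \<inter> {a..b} = A \<inter> {a..z} \<union> A \<inter> {z..b}" using z by auto
  have fin: "A \<inter> {a..z} \<in> fmeasurable lborel" "A \<inter> {z..b} \<in> fmeasurable lborel"
    by (intro fmeasurableI2[OF _ Int_lower2] meas; simp add: fmeasurable_def emeasure_lborel_Icc_eq)+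
  have "A \<inter> {a..z} \<inter> (A \<inter> {z..b}) \<in> null_sets lborel"
    by (rule finite_imp_null_set_lborel, rule finite_subset[of _ "{z}"]) auto
  hence "measure lborel (A \<inter> {a..z} \<inter> (A \<inter> {z..b})) = 0" by (simp add: measure_def null_setsD1)
  thus ?thesis using measure_Un3[OF fin] meas by (simp add: eq)
qed

lemma piecewise_const_interval_measure:
  assumes Z: "finite Z" "\<forall>z\<in>Z. algebraic z" and pc: "piecewise_const Z A"
  shows "a \<le> b \<Longrightarrow> algebraic a \<Longrightarrow> algebraic b \<Longrightarrow>
     A \<inter> {a..b} \<in> sets lborel \<and> algebraic (measure lborel (A \<inter> {a..b}))"
proof (induction "card (Z \<inter> {a<..<b})" arbitrary: a b rule: less_induct)
  case less
  show ?case
  proof (cases "Z \<inter> {a<..<b} = {}")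
    case True
    hence "A \<inter> {a<..<b} = {} \<or> {a<..<b} \<subseteq> A"
      by (intro piecewise_const_on_convex[OF pc]) auto
    from lborel_measure_gap[OF less.prems(1) this] show ?thesis
      using less.prems by (auto intro: algebraic_diff)
  next
    case False
    then obtain z where z: "z \<in> Z" "a < z" "z < b" by auto
    have "card (Z \<inter> {a<..<z}) < card (Z \<inter> {a<..<b})" "card (Z \<inter> {z<..<b}) < card (Z \<inter> {a<..<b})"
      using Z(1) z by (auto intro!: psubset_card_mono)
    moreover have "algebraic z" using Z(2) z(1) by blast
    ultimately have "A \<inter> {a..z} \<in> sets lborel \<and> algebraic (measure lborel (A \<inter> {a..z}))"
      "A \<inter> {z..b} \<in> sets lborel \<and> algebraic (measure lborel (A \<inter> {z..b}))"
      using less.hyps less.prems z by auto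
    thus ?thesis using lborel_measure_split[of a z b A] z by (auto intro: algebraic_add)
  qed
qed


lemma lborel_finite_measure_no_ray:
  fixes A :: "real set"
  assumes A: "A \<in> sets lborel" "emeasure lborel A < \<infinity>"
  shows "\<not> {..<a} \<subseteq> A" "\<not> {b<..} \<subseteq> A"
proof -
  let ?m = "measure lborel A"
  have long_interval: "r \<le> ?m" if "{c..c + r} \<subseteq> A" "0 \<le> r" for c r
  proof -
    have "measure lborel {c..c + r} \<le> ?m"
      using A that(1) by (intro measure_mono_fmeasurable) (auto simp: fmeasurable_def)
    thus ?thesis using that(2) by simp
  qed
  show "\<not> {..<a} \<subseteq> A" using long_interval[of "a - (?m + 2)" "?m + 1"] by force
  show "\<not> {b<..} \<subseteq> A" using long_interval[of "b + 1" "?m + 1"] by force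
qed

(* A set that is piecewise constant off finitely many algebraic points is measurable, and
   if its measure is finite it is algebraic: outside [Min Z, Max Z] it must be empty. *)
lemma piecewise_const_measure:
  assumes Z: "finite Z" "\<forall>z\<in>Z. algebraic z" and pc: "piecewise_const Z A"
  shows "A \<in> sets lborel \<and> (emeasure lborel A < \<infinity> \<longrightarrow> algebraic (measure lborel A))"
proof -
  define Z' where "Z' = insert 0 Z"
  define a where "a = Min Z'"
  define b where "b = Max Z'"
  have Z': "finite Z'" "Z' \<noteq> {}" "\<forall>z\<in>Z'. algebraic z" "piecewise_const Z' A"
    using Z piecewise_const_mono[OF pc, of Z'] by (auto simp: Z'_def)
  have "a \<in> Z'" "b \<in> Z'" "a \<le> b" using Z'(1,2) by (auto simp: a_def b_def)
  hence mid: "A \<inter> {a..b} \<in> sets lborel \<and> algebraic (measure lborel (A \<inter> {a..b}))"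
    using piecewise_const_interval_measure[OF Z'(1,3,4)] Z'(3) by blast
  have "{..<a} \<inter> Z' = {}" "{b<..} \<inter> Z' = {}"
    using Z'(1) by (auto simp: a_def b_def dest: Min_le Max_ge)
  hence left: "A \<inter> {..<a} = {} \<or> {..<a} \<subseteq> A" and right: "A \<inter> {b<..} = {} \<or> {b<..} \<subseteq> A"
    using piecewise_const_on_convex[OF Z'(4)] by simp_all
  have split: "A = A \<inter> {..<a} \<union> A \<inter> {a..b} \<union> A \<inter> {b<..}" by auto
  have "A \<inter> {..<a} \<in> sets lborel" "A \<inter> {b<..} \<in> sets lborel"
    using left right by (auto simp: Int_absorb1)
  hence meas: "A \<in> sets lborel" using mid by (subst split) auto
  moreover have "algebraic (measure lborel A)" if "emeasure lborel A < \<infinity>"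
  proof -
    have "A \<inter> {..<a} = {}" "A \<inter> {b<..} = {}"
      using left right lborel_finite_measure_no_ray[OF meas that] by auto
    hence "A = A \<inter> {a..b}" using split by auto
    thus ?thesis using mid by simp
  qed
  ultimately show ?thesis by blast
qed

lemma alg_poly_univariate:
  assumes "alg_poly 1 P"
  obtains q where "\<And>i. algebraic (coeff q i)" "\<And>x. P x = poly q (x 0)"
proof -
  have "\<exists>q. (\<forall>i. algebraic (coeff q i)) \<and> (\<forall>x. P x = poly q (x 0))"
    using assms
  proof (induction rule: alg_poly.induct)
    case (const c)
    show ?case by (rule exI[of _ "[:c:]"]) (auto simp: const coeff_pCons split: nat.splits)
  next
    case (var i)
    show ?case by (rule exI[of _ "[:0, 1:]"]) (use var in \<open>auto simp: coeff_pCons split: nat.splits\<close>)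
  next
    case (add P Q)
    then obtain p q where "\<forall>i. algebraic (coeff p i)" "\<forall>x. P x = poly p (x 0)"
      "\<forall>i. algebraic (coeff q i)" "\<forall>x. Q x = poly q (x 0)" by blast
    thus ?case by (intro exI[of _ "p + q"]) (auto intro: algebraic_add)
  next
    case (mult P Q)
    then obtain p q where "\<forall>i. algebraic (coeff p i)" "\<forall>x. P x = poly p (x 0)"
      "\<forall>i. algebraic (coeff q i)" "\<forall>x. Q x = poly q (x 0)" by blast
    thus ?case by (intro exI[of _ "p * q"]) (auto simp: coeff_mult intro!: algebraic_sum algebraic_mult)
  qed
  thus ?thesis using that by blast
qed

definition constraint_set :: "((nat \<Rightarrow> real) \<Rightarrow> real) \<times> bool \<Rightarrow> real set" where
  "constraint_set c = {t. if snd c then 0 < fst c (\<lambda>_. t) else 0 \<le> fst c (\<lambda>_. t)}"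

lemma constraint_set_piecewise_const:
  assumes "alg_poly 1 (fst c)"
  obtains Z where "finite Z" "\<forall>z\<in>Z. algebraic z" "piecewise_const Z (constraint_set c)"
proof -
  obtain q where coeffs: "\<And>i. algebraic (coeff q i)" and q: "\<And>x. fst c x = poly q (x 0)"
    using alg_poly_univariate[OF assms] by blast
  obtain Z where "finite Z" "\<forall>z\<in>Z. algebraic z"
    "piecewise_const Z {t. 0 < poly q t}" "piecewise_const Z {t. 0 \<le> poly q t}"
    using poly_sign_sets_piecewise_const[OF coeffs] by blast
  thus ?thesis using that by (cases "snd c") (simp_all add: constraint_set_def q)
qed

lemma basic_set_1:
  assumes "\<forall>c\<in>set cs. alg_poly 1 (fst c)"
  shows "basic_set 1 cs = {x \<in> Rn 1. x 0 \<in> (\<Inter>c\<in>set cs. constraint_set c)}"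
proof -
  have "fst c x = fst c (\<lambda>_. x 0)" if "c \<in> set cs" for c x
    using alg_poly_univariate[of "fst c"] assms that by metis
  thus ?thesis by (fastforce simp: basic_set_def constraint_set_def)
qed

lemma admissible_1_section:
  assumes "admissible 1 S"
  obtains A Z where "S = {x \<in> Rn 1. x 0 \<in> A}" "finite Z" "\<forall>z\<in>Z. algebraic z" "piecewise_const Z A"
proof -
  obtain F where F: "finite F" "S = \<Union>(basic_set 1 ` F)" "\<forall>cs\<in>F. \<forall>(P, _) \<in> set cs. alg_poly 1 P"
    using assms unfolding admissible_def by blast
  define C where "C = (\<Union>cs\<in>F. set cs)"
  have C_poly: "alg_poly 1 (fst c)" if c: "c \<in> C" for c
  proof -
    obtain cs where "cs \<in> F" "c \<in> set cs" using c unfolding C_def by blast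
    thus ?thesis using F(3) by (cases c) auto
  qed
  have "\<forall>c\<in>C. \<exists>Z. finite Z \<and> (\<forall>z\<in>Z. algebraic z) \<and> piecewise_const Z (constraint_set c)"
  proof
    fix c assume "c \<in> C"
    from constraint_set_piecewise_const[OF C_poly[OF this]]
    show "\<exists>Z. finite Z \<and> (\<forall>z\<in>Z. algebraic z) \<and> piecewise_const Z (constraint_set c)" by blast
  qed
  from bchoice[OF this] obtain Zc where Zc: "\<forall>c\<in>C. finite (Zc c) \<and> (\<forall>z\<in>Zc c. algebraic z) \<and>
      piecewise_const (Zc c) (constraint_set c)"
    by blast
  define Z where "Z = (\<Union>c\<in>C. Zc c)"
  define A where "A = (\<Union>cs\<in>F. \<Inter>c\<in>set cs. constraint_set c)"
  show ?thesis
  proof (rule that)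
    have basic: "basic_set 1 cs = {x \<in> Rn 1. x 0 \<in> (\<Inter>c\<in>set cs. constraint_set c)}"
      if cs: "cs \<in> F" for cs
      by (rule basic_set_1) (use cs C_poly in \<open>unfold C_def, blast\<close>)
    have "S = (\<Union>cs\<in>F. {x \<in> Rn 1. x 0 \<in> (\<Inter>c\<in>set cs. constraint_set c)})"
      unfolding F(2) using basic by (intro SUP_cong) simp_all
    thus "S = {x \<in> Rn 1. x 0 \<in> A}" unfolding A_def by blast
    show "finite Z" "\<forall>z\<in>Z. algebraic z" using F(1) Zc by (auto simp: Z_def C_def)
    have pc: "piecewise_const Z (constraint_set c)" if c: "c \<in> C" for c
      by (rule piecewise_const_mono[of "Zc c"]) (use Zc c in \<open>auto simp: Z_def\<close>)
    have "piecewise_const Z (\<Inter>c\<in>set cs. constraint_set c)" if cs: "cs \<in> F" for cs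
      by (rule piecewise_const_Union_Inter(2), rule pc) (use cs in \<open>auto simp: C_def\<close>)
    thus "piecewise_const Z A" unfolding A_def by (rule piecewise_const_Union_Inter(1))
  qed
qed

lemma Rn_1_section_measure:
  assumes A: "A \<in> sets lborel"
  shows "emeasure (PiM {..<1} (\<lambda>_. lborel)) {x \<in> Rn 1. x 0 \<in> A} = emeasure lborel A"
    "vol 1 {x \<in> Rn 1. x 0 \<in> A} = measure lborel A"
proof -
  interpret product_sigma_finite "\<lambda>_::nat. lborel :: real measure" by standard
  have coord_distr: "distr (PiM {0} (\<lambda>_. lborel)) lborel (\<lambda>x. x (0::nat)) = (lborel :: real measure)"
    using distr_singleton[of 0] by simp
  have coord_meas: "(\<lambda>x. x 0) \<in> measurable (PiM {0::nat} (\<lambda>_. lborel :: real measure)) lborel"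
    by (rule measurable_component_singleton) simp
  have "{..<1::nat} = {0}" by auto
  hence preimage: "(\<lambda>x. x 0) -` A \<inter> space (PiM {0::nat} (\<lambda>_. lborel :: real measure)) = {x \<in> Rn 1. x 0 \<in> A}"
    by (auto simp: Rn_def space_PiM)
  have "emeasure lborel A = emeasure (distr (PiM {0} (\<lambda>_. lborel)) lborel (\<lambda>x. x (0::nat))) A"
    by (simp add: coord_distr)
  also have "\<dots> = emeasure (PiM {..<1} (\<lambda>_. lborel)) {x \<in> Rn 1. x 0 \<in> A}"
    by (subst emeasure_distr[OF coord_meas A]) (simp add: preimage lessThan_Suc)
  finally show "emeasure (PiM {..<1} (\<lambda>_. lborel)) {x \<in> Rn 1. x 0 \<in> A} = emeasure lborel A" ..
  thus "vol 1 {x \<in> Rn 1. x 0 \<in> A} = measure lborel A" by (simp add: vol_def measure_def)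
qed

lemma admissible_1_volume_algebraic:
  assumes adm: "admissible 1 S"
  shows "algebraic (vol 1 S)"
proof -
  obtain A Z where S: "S = {x \<in> Rn 1. x 0 \<in> A}" and Z: "finite Z" "\<forall>z\<in>Z. algebraic z"
    and pc: "piecewise_const Z A"
    using admissible_1_section[OF adm] by blast
  have meas: "A \<in> sets lborel" and alg: "emeasure lborel A < \<infinity> \<Longrightarrow> algebraic (measure lborel A)"
    using piecewise_const_measure[OF Z pc] by blast+
  have "emeasure (PiM {..<1} (\<lambda>_. lborel)) S < \<infinity>" using adm unfolding admissible_def by blast
  hence "emeasure lborel A < \<infinity>" using Rn_1_section_measure(1)[OF meas] S by simp
  thus ?thesis using alg Rn_1_section_measure(2)[OF meas] S by simp
qed

lemma admissible_1_interval:
  fixes c :: real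
  assumes c: "0 \<le> c" "algebraic c"
  shows "admissible 1 {x \<in> Rn 1. x 0 \<in> {0..c}}" "vol 1 {x \<in> Rn 1. x 0 \<in> {0..c}} = c"
proof -
  define cs where "cs = [(\<lambda>x::nat\<Rightarrow>real. x 0, False), (\<lambda>x. c + -1 * x 0, False)]"
  have "alg_poly 1 (\<lambda>x. x 0)" by (rule alg_poly.var) simp
  moreover have "alg_poly 1 (\<lambda>x. c + -1 * x 0)"
    by (rule alg_poly.add[OF alg_poly.const[OF c(2)] alg_poly.mult[OF alg_poly.const alg_poly.var]])
       simp_all
  moreover have "basic_set 1 cs = {x \<in> Rn 1. x 0 \<in> {0..c}}"
    by (auto simp: basic_set_def cs_def)
  moreover have "emeasure (PiM {..<1} (\<lambda>_. lborel)) {x \<in> Rn 1. x 0 \<in> {0..c}} < \<infinity>"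
    using Rn_1_section_measure(1)[of "{0..c}"] c(1) by simp
  ultimately show "admissible 1 {x \<in> Rn 1. x 0 \<in> {0..c}}"
    unfolding admissible_def by (intro conjI exI[of _ "{cs}"]) (auto simp: cs_def)
  show "vol 1 {x \<in> Rn 1. x 0 \<in> {0..c}} = c"
    using Rn_1_section_measure(2)[of "{0..c}"] c(1) by simp
qed

lemma algebraic_period_dim_1:
  assumes "algebraic a"
  shows "1 \<in> real_period_dims a"
proof -
  define interval where "interval c = {x \<in> Rn 1. x 0 \<in> {0..c}}" for c :: real
  have "0 \<le> max a 0" "algebraic (max a 0)" "0 \<le> max (- a) 0" "algebraic (max (- a) 0)"
    using assms by (auto simp: max_def)
  note pos = admissible_1_interval[OF this(1,2)] and neg = admissible_1_interval[OF this(3,4)]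
  have "a = vol 1 (interval (max a 0)) - vol 1 (interval (max (- a) 0))"
    unfolding interval_def pos(2) neg(2) by (simp add: max_def)
  thus ?thesis using pos(1) neg(1) unfolding real_period_dims_def interval_def by blast
qed

lemma real_deg_algebraic:
  assumes "algebraic a"
  shows "real_period a" "real_deg a = (if a = 0 then 0 else 1)"
proof -
  have dim: "1 \<in> real_period_dims a" by (rule algebraic_period_dim_1[OF assms])
  thus "real_period a" by (auto simp: real_period_def)
  moreover have "(LEAST n. n \<in> real_period_dims a) = 1"
    by (rule Least_equality[where P = "\<lambda>n. n \<in> real_period_dims a", OF dim])
       (simp add: real_period_dims_def)
  ultimately show "real_deg a = (if a = 0 then 0 else 1)" by (simp add: real_deg_def one_enat_def)
qed

lemma real_deg_le_1_algebraic:
  assumes period: "real_period a" and deg: "real_deg a \<le> 1"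
  shows "algebraic a"
proof (cases "a = 0")
  case False
  define m where "m = (LEAST n. n \<in> real_period_dims a)"
  obtain n where "n \<in> real_period_dims a" using period unfolding real_period_def by blast
  hence m: "m \<in> real_period_dims a" unfolding m_def by (rule LeastI)
  have "enat m \<le> 1" using deg False period by (simp add: real_deg_def m_def)
  hence "m = 1" using m by (simp add: one_enat_def real_period_dims_def)
  then obtain S1 S2 where S: "admissible 1 S1" "admissible 1 S2" and a: "a = vol 1 S1 - vol 1 S2"
    using m by (auto simp: real_period_dims_def)
  show ?thesis unfolding a by (intro algebraic_diff admissible_1_volume_algebraic S)
qed simp

theorem mainTheorem3:
  fixes p :: complex
  shows "(deg p = 1 \<longleftrightarrow> p \<noteq> 0 \<and> algebraic p)
         \<and> (algebraic p \<longrightarrow> period p)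
         \<and> (period p \<and> deg p \<le> 1 \<longrightarrow> algebraic p)"
proof -
  have algebraic_period: "period p \<and> deg p = (if p = 0 then 0 else 1)" if "algebraic p"
  proof -
    have "algebraic (Re p)" "algebraic (Im p)" using that algebraic_complex_iff by blast+
    note Re = real_deg_algebraic[OF this(1)] and Im = real_deg_algebraic[OF this(2)]
    have "p = 0 \<longleftrightarrow> Re p = 0 \<and> Im p = 0" by (simp add: complex_eq_iff)
    thus ?thesis using Re Im by (simp add: period_def deg_def)
  qed
  have low_degree: "algebraic p" if period: "period p" and deg: "deg p \<le> 1"
  proof -
    have "real_period (Re p)" "real_period (Im p)" using period by (simp_all add: period_def)
    moreover have "real_deg (Re p) \<le> 1" "real_deg (Im p) \<le> 1" using period deg by (simp_all add: deg_def)
    ultimately show ?thesis by (simp add: algebraic_complex_iff real_deg_le_1_algebraic)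
  qed
  have degree_one: "period p \<and> p \<noteq> 0" if "deg p = 1"
    using that by (auto simp: deg_def real_deg_def split: if_splits)
  show ?thesis
  proof (intro conjI impI)
    show "deg p = 1 \<longleftrightarrow> p \<noteq> 0 \<and> algebraic p"
    proof
      assume "deg p = 1"
      thus "p \<noteq> 0 \<and> algebraic p" using degree_one low_degree by simp
    next
      assume "p \<noteq> 0 \<and> algebraic p"
      thus "deg p = 1" using algebraic_period by simp
    qed
  qed (use algebraic_period low_degree in blast)+
qed

end
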